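(* Let $(V,E)$ be a finite graph with $E\ne\emptyset$ and $p\in(0,1)$. Let $(\eta_t,\sigma_t)_{t\ge0}$ be a continuous-time Markov jump process on $\mathcal C$ with the following rates: (a) if $\sigma'=\sigma$ and there is $e\in E$ with $\eta'=\eta^e$ and $\gamma_\eta(e)=1$, then $c((\eta,\sigma),(\eta',\sigma'))=\big((1-p)\mathbf 1_{\eta(e)=1}+p\mathbf 1_{\eta(e)=0}\big)\mathbf 1_{(\eta,\sigma)\in\mathcal C}$; (b) if $\sigma'=\sigma$ and there is $e\in E$ with $\eta'=\eta^e$, $\gamma_\eta(e)=0$ and $\delta_\sigma(e)=1$, then $c((\eta,\sigma),(\eta',\sigma'))=\frac12\big((1-p)\mathbf 1_{\eta(e)=1}+p\mathbf 1_{\eta(e)=0}\big)\mathbf 1_{(\eta,\sigma)\in\mathcal C}$; (c) if there are $x\in V$ and $e\in E_x$ with $\eta'=\eta^e$, $\gamma_\eta(e)=0$, $\eta(e)=\delta_\sigma(e)$, and $\sigma'(y)=-\sigma(y)$ for the vertices $y$ connected to $x$ by an open path of $\eta$ not using $e$ (including $y=x$), $\sigma'(y)=\sigma(y)$ otherwise, then $c((\eta,\sigma),(\eta',\sigma'))=\frac14\big((1-p)\mathbf 1_{\eta(e)=1}\mathbf 1_{(\eta,\sigma)\in\mathcal C}+p\mathbf 1_{\eta(e)=0}\mathbf 1_{(\eta',\sigma')\in\mathcal C}\big)$; (d) all other off-diagonal rates are $0$. Then $(\eta_t,\sigma_t)_{t\ge0}$ is reversible with respect to $IP$; its edge marginal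 $(\eta_t)_{t\ge0}$ is a Markov jump process evolving according to the FK dynamics, i.e. with rates $\tilde c(\eta,\eta^e)=1-p$ if $\eta(e)=1$, $p$ if $\eta(e)=0$ and $\gamma_\eta(e)=1$, $p/2$ if $\eta(e)=0$ and $\gamma_\eta(e)=0$ (and $0$ for changes of two or more edges); and its spin marginal $(\sigma_t)_{t\ge0}$ is not a Markov jump process.
   Context: Edge configurations $\eta\in\{0,1\}^E$ (1 = open), spin configurations $\sigma\in\{-1,1\}^V$. For $e=\langle x,y\rangle$, $\delta_\sigma(e)=\mathbf 1_{\sigma(x)=\sigma(y)}$. $\mathcal C=\{(\eta,\sigma):\eta(e)\le\delta_\sigma(e)\ \forall e\in E\}$. $IP(\eta,\sigma)=\frac1Z\prod_{e\in E}\big(p\mathbf 1_{\eta(e)=1}\delta_\sigma(e)+(1-p)\mathbf 1_{\eta(e)=0}\big)$ with $Z$ the normalizing constant. $E_x$ is the set of edges with endvertex $x$; $\eta^e$ is $\eta$ with the value at $e$ changed. For $e=\langle x,y\rangle$, $\gamma_\eta(e)=1$ if $x,y$ are connected by a path of open edges of $\eta$ not using $e$, and $0$ otherwise. Reversibility w.r.t. $IP$ means $IP(a)c(a,b)=IP(b)c(b,a)$ for all states. A marginal process is a Markov jump process if it is a time-homogeneous Markov process for every initial distribution, with transition rates not depending on the initial distribution. *)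

theory Defs
  imports Complex_Main "HOL-Library.FuncSet"
begin

definition graph :: "'v set \<Rightarrow> 'v set set \<Rightarrow> bool" where
  "graph V E \<longleftrightarrow> finite V \<and> (\<forall>e\<in>E. \<exists>x y. x \<in> V \<and> y \<in> V \<and> x \<noteq> y \<and> e = {x, y})"

text \<open>An edge configuration eta is represented by the set of its open edges (a subset of E);
  a spin configuration is an element of V ->_E {-1,1}.\<close>
definition spins :: "'v set \<Rightarrow> ('v \<Rightarrow> int) set" where
  "spins V = (V \<rightarrow>\<^sub>E {-1, 1})"

definition delta :: "('v \<Rightarrow> int) \<Rightarrow> 'v set \<Rightarrow> bool" where
  "delta \<sigma> e \<longleftrightarrow> (\<forall>x\<in>e. \<forall>y\<in>e. \<sigma> x = \<sigma> y)"

definition conn :: "'v set set \<Rightarrow> 'v \<Rightarrow> 'v \<Rightarrow> bool" where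
  "conn F x y \<longleftrightarrow> (x, y) \<in> {(a, b). {a, b} \<in> F}\<^sup>*"

definition gamma :: "'v set set \<Rightarrow> 'v set \<Rightarrow> bool" where
  "gamma \<eta> e \<longleftrightarrow> (\<forall>x\<in>e. \<forall>y\<in>e. conn (\<eta> - {e}) x y)"

definition flipE :: "'v set set \<Rightarrow> 'v set \<Rightarrow> 'v set set" where
  "flipE \<eta> e = (if e \<in> \<eta> then \<eta> - {e} else insert e \<eta>)"

definition flipcl :: "'v set set \<Rightarrow> 'v set \<Rightarrow> 'v \<Rightarrow> ('v \<Rightarrow> int) \<Rightarrow> ('v \<Rightarrow> int)" where
  "flipcl \<eta> e x \<sigma> = (\<lambda>y. if conn (\<eta> - {e}) x y then - \<sigma> y else \<sigma> y)"

definition CS :: "'v set \<Rightarrow> 'v set set \<Rightarrow> ('v set set \<times> ('v \<Rightarrow> int)) set" where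
  "CS V E = {(\<eta>, \<sigma>). \<eta> \<subseteq> E \<and> \<sigma> \<in> spins V \<and> (\<forall>e\<in>\<eta>. delta \<sigma> e)}"

definition ipw :: "'v set set \<Rightarrow> real \<Rightarrow> ('v set set \<times> ('v \<Rightarrow> int)) \<Rightarrow> real" where
  "ipw E p s = (\<Prod>e\<in>E. (if e \<in> fst s then p * of_bool (delta (snd s) e) else 0)
                        + (if e \<notin> fst s then 1 - p else 0))"

definition IP :: "'v set \<Rightarrow> 'v set set \<Rightarrow> real \<Rightarrow> ('v set set \<times> ('v \<Rightarrow> int)) \<Rightarrow> real" where
  "IP V E p s = ipw E p s / (\<Sum>s'\<in>CS V E. ipw E p s')"

definition frate :: "real \<Rightarrow> 'v set set \<Rightarrow> 'v set \<Rightarrow> real" where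
  "frate p \<eta> e = (1 - p) * of_bool (e \<in> \<eta>) + p * of_bool (e \<notin> \<eta>)"

text \<open>Off-diagonal rates (a)-(d). The cases are mutually exclusive (the target state determines
  the edge e and, in case (c), the vertex x), so the rate is the sum of the contributions.\<close>
definition crate :: "'v set \<Rightarrow> 'v set set \<Rightarrow> real \<Rightarrow>
    ('v set set \<times> ('v \<Rightarrow> int)) \<Rightarrow> ('v set set \<times> ('v \<Rightarrow> int)) \<Rightarrow> real" where
  "crate V E p s s' = (let \<eta> = fst s; \<sigma> = snd s; \<eta>' = fst s'; \<sigma>' = snd s' in
     (\<Sum>e\<in>E.
        (if \<sigma>' = \<sigma> \<and> \<eta>' = flipE \<eta> e \<and> gamma \<eta> e
         then frate p \<eta> e * of_bool (s \<in> CS V E) else 0)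
      + (if \<sigma>' = \<sigma> \<and> \<eta>' = flipE \<eta> e \<and> \<not> gamma \<eta> e \<and> delta \<sigma> e
         then 1/2 * frate p \<eta> e * of_bool (s \<in> CS V E) else 0)
      + (\<Sum>x\<in>e. if x \<in> V \<and> \<eta>' = flipE \<eta> e \<and> \<not> gamma \<eta> e \<and> (e \<in> \<eta> \<longleftrightarrow> delta \<sigma> e)
                    \<and> \<sigma>' = flipcl \<eta> e x \<sigma>
                 then 1/4 * ((1 - p) * of_bool (e \<in> \<eta>) * of_bool (s \<in> CS V E)
                             + p * of_bool (e \<notin> \<eta>) * of_bool (s' \<in> CS V E))
                 else 0)))"

definition fk_rate :: "'v set set \<Rightarrow> real \<Rightarrow> 'v set set \<Rightarrow> 'v set set \<Rightarrow> real" where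
  "fk_rate E p \<eta> \<eta>' = (\<Sum>e\<in>E. if \<eta>' = flipE \<eta> e then
      (if e \<in> \<eta> then 1 - p else if gamma \<eta> e then p else p / 2) else 0)"

definition gen :: "'a set \<Rightarrow> ('a \<Rightarrow> 'a \<Rightarrow> real) \<Rightarrow> 'a \<Rightarrow> 'a \<Rightarrow> real" where
  "gen S r a b = (if a = b then - (\<Sum>c\<in>S - {a}. r a c) else r a b)"

fun qpow :: "'a set \<Rightarrow> ('a \<Rightarrow> 'a \<Rightarrow> real) \<Rightarrow> nat \<Rightarrow> 'a \<Rightarrow> 'a \<Rightarrow> real" where
  "qpow S Q 0 a b = (if a = b then 1 else 0)"
| "qpow S Q (Suc n) a b = (\<Sum>c\<in>S. qpow S Q n a c * Q c b)"

definition trans :: "'a set \<Rightarrow> ('a \<Rightarrow> 'a \<Rightarrow> real) \<Rightarrow> real \<Rightarrow> 'a \<Rightarrow> 'a \<Rightarrow> real" where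
  "trans S Q t a b = (\<Sum>n. t ^ n / fact n * qpow S Q n a b)"

fun chain :: "'a set \<Rightarrow> ('a \<Rightarrow> 'a \<Rightarrow> real) \<Rightarrow> 'a \<Rightarrow> real \<Rightarrow> (real \<times> 'a) list \<Rightarrow> real" where
  "chain S Q z s [] = 1"
| "chain S Q z s ((t, x) # rest) = trans S Q (t - s) z x * chain S Q x t rest"

text \<open>Finite-dimensional distribution: probability that X_{t_i} = x_i for all i,
  for 0 <= t_1 <= ... <= t_n, when X_0 has law mu.\<close>
definition fdd :: "'a set \<Rightarrow> ('a \<Rightarrow> 'a \<Rightarrow> real) \<Rightarrow> ('a \<Rightarrow> real) \<Rightarrow> (real \<times> 'a) list \<Rightarrow> real" where
  "fdd S Q \<mu> obs = (\<Sum>z\<in>S. \<mu> z * chain S Q z 0 obs)"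

definition distr :: "'a set \<Rightarrow> ('a \<Rightarrow> real) \<Rightarrow> bool" where
  "distr S \<mu> \<longleftrightarrow> (\<forall>x\<in>S. 0 \<le> \<mu> x) \<and> sum \<mu> S = 1"

definition valid_times :: "(real \<times> 'b) list \<Rightarrow> bool" where
  "valid_times obs \<longleftrightarrow> sorted (0 # map fst obs)"

definition marg_fdd :: "'a set \<Rightarrow> ('a \<Rightarrow> 'a \<Rightarrow> real) \<Rightarrow> ('a \<Rightarrow> 'b) \<Rightarrow> ('a \<Rightarrow> real)
    \<Rightarrow> (real \<times> 'b) list \<Rightarrow> real" where
  "marg_fdd S Q f \<mu> obs = (\<Sum>xs\<in>{xs. length xs = length obs \<and> set xs \<subseteq> S \<and> map f xs = map snd obs}.
       fdd S Q \<mu> (zip (map fst obs) xs))"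

definition push :: "'a set \<Rightarrow> ('a \<Rightarrow> 'b) \<Rightarrow> ('a \<Rightarrow> real) \<Rightarrow> 'b \<Rightarrow> real" where
  "push S f \<mu> y = (\<Sum>x\<in>{x\<in>S. f x = y}. \<mu> x)"

definition marginal_mjp_with :: "'a set \<Rightarrow> ('a \<Rightarrow> 'a \<Rightarrow> real) \<Rightarrow> ('a \<Rightarrow> 'b) \<Rightarrow> 'b set
    \<Rightarrow> ('b \<Rightarrow> 'b \<Rightarrow> real) \<Rightarrow> bool" where
  "marginal_mjp_with S Q f T r \<longleftrightarrow>
     (\<forall>\<mu> obs. distr S \<mu> \<longrightarrow> valid_times obs \<longrightarrow> set (map snd obs) \<subseteq> T \<longrightarrow>
        marg_fdd S Q f \<mu> obs = fdd T (gen T r) (push S f \<mu>) obs)"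

definition marginal_is_mjp :: "'a set \<Rightarrow> ('a \<Rightarrow> 'a \<Rightarrow> real) \<Rightarrow> ('a \<Rightarrow> 'b) \<Rightarrow> 'b set \<Rightarrow> bool" where
  "marginal_is_mjp S Q f T \<longleftrightarrow>
     (\<exists>r. (\<forall>a\<in>T. \<forall>b\<in>T. a \<noteq> b \<longrightarrow> 0 \<le> r a b) \<and> marginal_mjp_with S Q f T r)"

definition reversible :: "'a set \<Rightarrow> ('a \<Rightarrow> real) \<Rightarrow> ('a \<Rightarrow> 'a \<Rightarrow> real) \<Rightarrow> bool" where
  "reversible S \<pi> c \<longleftrightarrow> (\<forall>a\<in>S. \<forall>b\<in>S. \<pi> a * c a b = \<pi> b * c b a)"

end

(*
  Between compatible configurations the rate of flipping an edge e factors as (1 - p) or p,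
  according as e is open or closed, times a kernel in the spins that is symmetric under
  reversing the move. Since the IP-weight of the state of e times that factor is p (1 - p)
  either way, detailed balance holds. Summing the kernel over the compatible spin
  configurations of the target edge configuration gives 1, or 1/2 if e is closed and its
  endpoints are not joined by open edges, whatever the spins are; so the edge marginal is a
  strong lumping of the joint chain, with the FK rates.

  If the spin marginal were a Markov jump process, the one-dimensional marginals started at
  two configurations with the same spins would agree for all times, and differentiating at
  time 0 shows that the two configurations would have the same rates into every set of
  states with given spins. This fails for the all-plus spins with no open edge, where no spin
  can change, and with a single open edge, whose closing may flip one of its endpoints.
*)
theory Submission
  imports Defs
begin

section \<open>Finite-state Markov jump processes\<close>

lemma qpow_abs_le:
  assumes "finite S" "b \<in> S"
  shows "\<bar>qpow S Q n a b\<bar> \<le> (\<Sum>c\<in>S. \<Sum>d\<in>S. \<bar>Q c d\<bar>) ^ n"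
  using assms(2)
proof (induction n arbitrary: b)
  case 0
  then show ?case by simp
next
  case (Suc n)
  let ?K = "\<Sum>c\<in>S. \<Sum>d\<in>S. \<bar>Q c d\<bar>"
  have col: "(\<Sum>c\<in>S. \<bar>Q c b\<bar>) \<le> ?K"
    by (intro sum_mono member_le_sum Suc.prems) (auto simp: assms(1))
  have "\<bar>qpow S Q (Suc n) a b\<bar> \<le> (\<Sum>c\<in>S. \<bar>qpow S Q n a c\<bar> * \<bar>Q c b\<bar>)"
    by (simp add: abs_mult[symmetric] sum_abs)
  also have "\<dots> \<le> (\<Sum>c\<in>S. ?K ^ n * \<bar>Q c b\<bar>)"
    by (intro sum_mono mult_right_mono Suc.IH) auto
  also have "\<dots> \<le> ?K ^ n * ?K"
    using col by (simp add: sum_distrib_left[symmetric] mult_left_mono sum_nonneg)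
  finally show ?case by (simp add: mult.commute)
qed

lemma summable_trans_series:
  assumes "finite S" "b \<in> S"
  shows "summable (\<lambda>n. qpow S Q n a b / fact n * t ^ n)"
proof (rule summable_comparison_test'[OF summable_exp, where N = 0])
  let ?K = "\<Sum>c\<in>S. \<Sum>d\<in>S. \<bar>Q c d\<bar>"
  fix n
  have "norm (qpow S Q n a b / fact n * t ^ n) = inverse (fact n) * (\<bar>qpow S Q n a b\<bar> * \<bar>t\<bar> ^ n)"
    by (simp add: abs_mult power_abs divide_inverse)
  also have "\<dots> \<le> inverse (fact n) * (?K ^ n * \<bar>t\<bar> ^ n)"
    by (intro mult_left_mono mult_right_mono qpow_abs_le assms) auto
  finally show "norm (qpow S Q n a b / fact n * t ^ n) \<le> inverse (fact n) * (\<bar>t\<bar> * ?K) ^ n"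
    by (simp add: power_mult_distrib mult.commute)
qed

lemma trans_eq_suminf:
  "trans S Q t a b = (\<Sum>n. qpow S Q n a b / fact n * t ^ n)"
  unfolding trans_def by (simp add: mult.commute)

lemma qpow_1:
  assumes "finite S" "a \<in> S"
  shows "qpow S Q 1 a b = Q a b"
proof -
  have "qpow S Q 1 a b = (\<Sum>c\<in>S. if a = c then Q c b else 0)"
    by (simp add: if_distrib[of "\<lambda>x. x * _"] cong: if_cong)
  then show ?thesis
    using assms by simp
qed

lemma has_field_derivative_trans_0:
  assumes "finite S" "a \<in> S" "b \<in> S"
  shows "((\<lambda>t. trans S Q t a b) has_field_derivative Q a b) (at 0)"
proof -
  let ?c = "\<lambda>n. qpow S Q n a b / fact n"
  have "((\<lambda>t. \<Sum>n. ?c n * t ^ n) has_field_derivative (\<Sum>n. diffs ?c n * 0 ^ n)) (at 0)"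
    by (intro termdiffs_strong_converges_everywhere summable_trans_series assms)
  moreover have "(\<Sum>n. diffs ?c n * 0 ^ n) = Q a b"
    using powser_zero[of "diffs ?c"] qpow_1[OF assms(1,2)] by (simp add: diffs_def)
  ultimately show ?thesis
    by (simp add: trans_eq_suminf)
qed

locale lumpable =
  fixes S :: "'a set" and T :: "'b set" and f :: "'a \<Rightarrow> 'b"
    and Q :: "'a \<Rightarrow> 'a \<Rightarrow> real" and Q' :: "'b \<Rightarrow> 'b \<Rightarrow> real"
  assumes finite_S: "finite S" and finite_T: "finite T" and image_S: "f ` S \<subseteq> T"
    and lump: "\<And>a b. a \<in> S \<Longrightarrow> b \<in> T \<Longrightarrow> (\<Sum>s\<in>{s\<in>S. f s = b}. Q a s) = Q' (f a) b"
begin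

lemma sum_over_fibers:
  "(\<Sum>s\<in>S. g s) = (\<Sum>b\<in>T. \<Sum>s\<in>{s\<in>S. f s = b}. g s)"
  by (rule sum.group[symmetric, OF finite_S finite_T image_S])

lemma qpow_lumped:
  assumes "a \<in> S" "b \<in> T"
  shows "(\<Sum>s\<in>{s\<in>S. f s = b}. qpow S Q n a s) = qpow T Q' n (f a) b"
  using assms(2)
proof (induction n arbitrary: b)
  case 0
  then show ?case
    using assms(1) finite_S by (simp add: sum.delta)
next
  case (Suc n)
  have "(\<Sum>s\<in>{s\<in>S. f s = b}. qpow S Q (Suc n) a s)
      = (\<Sum>c\<in>S. qpow S Q n a c * (\<Sum>s\<in>{s\<in>S. f s = b}. Q c s))"
    by (simp add: sum_distrib_left sum.swap[of _ S])
  also have "\<dots> = (\<Sum>c\<in>S. qpow S Q n a c * Q' (f c) b)"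
    by (intro sum.cong refl) (simp add: lump Suc.prems)
  also have "\<dots> = (\<Sum>d\<in>T. (\<Sum>c\<in>{c\<in>S. f c = d}. qpow S Q n a c) * Q' d b)"
    by (simp add: sum_over_fibers[of "\<lambda>c. qpow S Q n a c * Q' (f c) b"] sum_distrib_right)
  also have "\<dots> = (\<Sum>d\<in>T. qpow T Q' n (f a) d * Q' d b)"
    by (intro sum.cong refl) (simp add: Suc.IH)
  finally show ?case by simp
qed

lemma trans_lumped:
  assumes "a \<in> S" "b \<in> T"
  shows "(\<Sum>s\<in>{s\<in>S. f s = b}. trans S Q t a s) = trans T Q' t (f a) b"
proof -
  have "(\<Sum>s\<in>{s\<in>S. f s = b}. trans S Q t a s)
      = (\<Sum>n. \<Sum>s\<in>{s\<in>S. f s = b}. qpow S Q n a s / fact n * t ^ n)"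
    unfolding trans_eq_suminf using finite_S
    by (intro suminf_sum[symmetric] summable_trans_series) auto
  also have "\<dots> = (\<Sum>n. qpow T Q' n (f a) b / fact n * t ^ n)"
    by (simp add: sum_distrib_right[symmetric] sum_divide_distrib[symmetric] qpow_lumped assms)
  finally show ?thesis
    by (simp add: trans_eq_suminf)
qed

definition lifts :: "(real \<times> 'b) list \<Rightarrow> 'a list set" where
  "lifts obs = {xs. length xs = length obs \<and> set xs \<subseteq> S \<and> map f xs = map snd obs}"

lemma lifts_Nil: "lifts [] = {[]}"
  by (auto simp: lifts_def)

lemma lifts_Cons:
  "lifts ((t, y) # obs) = (\<lambda>(x, xs). x # xs) ` ({x\<in>S. f x = y} \<times> lifts obs)"
  by (auto simp: lifts_def length_Suc_conv image_iff)

lemma chain_lumped: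
  assumes "a \<in> S" "set (map snd obs) \<subseteq> T"
  shows "(\<Sum>xs\<in>lifts obs. chain S Q a s (zip (map fst obs) xs)) = chain T Q' (f a) s obs"
  using assms
proof (induction obs arbitrary: a s)
  case Nil
  then show ?case by (simp add: lifts_Nil)
next
  case (Cons o1 obs)
  obtain t y where o1: "o1 = (t, y)" by force
  have inj: "inj_on (\<lambda>(x, xs). x # xs) ({x\<in>S. f x = y} \<times> lifts obs)"
    by (auto simp: inj_on_def)
  have "(\<Sum>xs\<in>lifts (o1 # obs). chain S Q a s (zip (map fst (o1 # obs)) xs))
      = (\<Sum>x\<in>{x\<in>S. f x = y}. trans S Q (t - s) a x
           * (\<Sum>xs\<in>lifts obs. chain S Q x t (zip (map fst obs) xs)))"
    unfolding o1 lifts_Cons sum.reindex[OF inj]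
    by (simp add: sum.cartesian_product split_def sum_distrib_left)
  also have "\<dots> = (\<Sum>x\<in>{x\<in>S. f x = y}. trans S Q (t - s) a x) * chain T Q' y t obs"
    using Cons.prems by (simp add: Cons.IH o1 sum_distrib_right)
  also have "\<dots> = chain T Q' (f a) s (o1 # obs)"
    using Cons.prems by (simp add: trans_lumped o1)
  finally show ?case .
qed

lemma marg_fdd_lumped:
  assumes "set (map snd obs) \<subseteq> T"
  shows "marg_fdd S Q f \<mu> obs = fdd T Q' (push S f \<mu>) obs"
proof -
  have "marg_fdd S Q f \<mu> obs
      = (\<Sum>a\<in>S. \<mu> a * (\<Sum>xs\<in>lifts obs. chain S Q a 0 (zip (map fst obs) xs)))"
    unfolding marg_fdd_def fdd_def lifts_def[symmetric]
    by (simp add: sum_distrib_left sum.swap[of _ "lifts obs"])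
  also have "\<dots> = (\<Sum>a\<in>S. \<mu> a * chain T Q' (f a) 0 obs)"
    using assms by (simp add: chain_lumped)
  also have "\<dots> = fdd T Q' (push S f \<mu>) obs"
    by (simp add: sum_over_fibers[of "\<lambda>a. \<mu> a * chain T Q' (f a) 0 obs"] fdd_def push_def
        sum_distrib_right)
  finally show ?thesis .
qed

end

lemma sum_gen_row:
  assumes "finite S" "a \<in> S"
  shows "(\<Sum>s\<in>S. gen S r a s) = 0"
proof -
  have "(\<Sum>s\<in>S - {a}. gen S r a s) = (\<Sum>s\<in>S - {a}. r a s)"
    by (intro sum.cong) (auto simp: gen_def)
  then show ?thesis
    using assms by (simp add: sum.remove[of S a] gen_def)
qed

text \<open>Strong lumpability (Kemeny and Snell). Only the off-diagonal rates need to lump: the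
  diagonal follows because the rows of a generator sum to zero.\<close>
lemma marginal_mjp_with_if_lumpable:
  assumes "finite S" "finite T" "f ` S \<subseteq> T"
    and lump: "\<And>a b. a \<in> S \<Longrightarrow> b \<in> T \<Longrightarrow> b \<noteq> f a \<Longrightarrow>
      (\<Sum>s\<in>{s\<in>S. f s = b}. r a s) = r' (f a) b"
  shows "marginal_mjp_with S (gen S r) f T r'"
proof -
  have off_diag: "(\<Sum>s\<in>{s\<in>S. f s = b}. gen S r a s) = gen T r' (f a) b"
    if "a \<in> S" "b \<in> T" "b \<noteq> f a" for a b
  proof -
    have "(\<Sum>s\<in>{s\<in>S. f s = b}. gen S r a s) = (\<Sum>s\<in>{s\<in>S. f s = b}. r a s)"
      using that by (intro sum.cong) (auto simp: gen_def)
    then show ?thesis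
      using that lump[OF that] by (simp add: gen_def)
  qed
  interpret lumpable S T f "gen S r" "gen T r'"
  proof
    fix a b assume a: "a \<in> S" and b: "b \<in> T"
    show "(\<Sum>s\<in>{s\<in>S. f s = b}. gen S r a s) = gen T r' (f a) b"
    proof (cases "b = f a")
      case True
      have fa: "f a \<in> T" using a assms(3) by blast
      have "0 = (\<Sum>d\<in>T. \<Sum>s\<in>{s\<in>S. f s = d}. gen S r a s)"
        using sum.group[OF assms(1-3), of "gen S r a"] sum_gen_row[OF assms(1) a, of r] by simp
      also have "\<dots> = (\<Sum>s\<in>{s\<in>S. f s = f a}. gen S r a s) + (\<Sum>d\<in>T - {f a}. gen T r' (f a) d)"
        using a by (simp add: sum.remove[OF assms(2) fa] off_diag)
      also have "(\<Sum>d\<in>T - {f a}. gen T r' (f a) d) = (\<Sum>d\<in>T - {f a}. r' (f a) d)"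
        by (intro sum.cong) (auto simp: gen_def)
      finally show ?thesis
        using True by (simp add: gen_def eq_neg_iff_add_eq_0)
    qed (use a b off_diag in simp)
  qed (use assms in auto)
  show ?thesis
    unfolding marginal_mjp_with_def using marg_fdd_lumped by blast
qed

lemma marg_fdd_point_mass_single:
  assumes "finite S" "a \<in> S"
  shows "marg_fdd S Q f (\<lambda>x. of_bool (x = a)) [(t, y)] = (\<Sum>x\<in>{x\<in>S. f x = y}. trans S Q t a x)"
proof -
  have lifts: "{xs. length xs = length [(t, y)] \<and> set xs \<subseteq> S \<and> map f xs = map snd [(t, y)]}
      = (\<lambda>x. [x]) ` {x\<in>S. f x = y}"
    by (auto simp: length_Suc_conv)
  have inj: "inj_on (\<lambda>x. [x]) {x\<in>S. f x = y}"
    by (auto simp: inj_on_def)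
  have "fdd S Q (\<lambda>x. of_bool (x = a)) [(t, x)] = trans S Q t a x" for x
    using assms by (simp add: fdd_def sum.delta')
  then show ?thesis
    unfolding marg_fdd_def lifts by (simp add: sum.reindex[OF inj])
qed

lemma push_point_mass:
  assumes "finite S" "a \<in> S"
  shows "push S f (\<lambda>x. of_bool (x = a)) = (\<lambda>y. of_bool (f a = y))"
  using assms by (auto simp: push_def of_bool_def sum.delta' cong: if_cong)

lemma DERIV_unique_Ici:
  fixes g h :: "real \<Rightarrow> real"
  assumes "DERIV g x :> D" "DERIV h x :> D'" "\<And>t. x \<le> t \<Longrightarrow> g t = h t"
  shows "D = D'"
proof -
  have "(g has_field_derivative D) (at x within {x..})"
    using assms(1) by (rule has_field_derivative_at_within)
  then have "(h has_field_derivative D) (at x within {x..})"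
    using assms(3) by (subst has_field_derivative_cong_eventually[symmetric])
      (auto simp: eventually_at_filter)
  moreover have "(h has_field_derivative D') (at x within {x..})"
    using assms(2) by (rule has_field_derivative_at_within)
  moreover have "at x within {x..} \<noteq> bot"
    by (simp add: at_within_Ici_at_right)
  ultimately show ?thesis
    by (rule has_field_derivative_unique)
qed

lemma marginal_mjp_with_fiber_rates_eq:
  assumes S: "finite S" and mjp: "marginal_mjp_with S Q f T r"
    and a: "a \<in> S" and a': "a' \<in> S" and "f a = f a'" and y: "y \<in> T"
  shows "(\<Sum>x\<in>{x\<in>S. f x = y}. Q a x) = (\<Sum>x\<in>{x\<in>S. f x = y}. Q a' x)"
proof (rule DERIV_unique_Ici)
  let ?F = "{x\<in>S. f x = y}"
  have distr: "distr S (\<lambda>x. of_bool (x = b))" if "b \<in> S" for b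
    using S that by (simp add: distr_def sum.delta')
  have deriv: "DERIV (\<lambda>t. \<Sum>x\<in>?F. trans S Q t b x) 0 :> (\<Sum>x\<in>?F. Q b x)" if "b \<in> S" for b
    using S that by (intro DERIV_sum has_field_derivative_trans_0) auto
  show "DERIV (\<lambda>t. \<Sum>x\<in>?F. trans S Q t a x) 0 :> (\<Sum>x\<in>?F. Q a x)"
    by (rule deriv[OF a])
  show "DERIV (\<lambda>t. \<Sum>x\<in>?F. trans S Q t a' x) 0 :> (\<Sum>x\<in>?F. Q a' x)"
    by (rule deriv[OF a'])
  fix t :: real assume "0 \<le> t"
  then have obs: "valid_times [(t, y)]" "set (map snd [(t, y)]) \<subseteq> T"
    using y by (auto simp: valid_times_def)
  show "(\<Sum>x\<in>?F. trans S Q t a x) = (\<Sum>x\<in>?F. trans S Q t a' x)"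
    using mjp distr[OF a] distr[OF a'] obs \<open>f a = f a'\<close>
    by (simp add: marginal_mjp_with_def marg_fdd_point_mass_single[symmetric] S a a'
        push_point_mass)
qed

section \<open>Clusters and compatible configurations\<close>

lemma conn_refl [simp]: "conn F x x"
  by (simp add: conn_def)

lemma conn_sym: "conn F x y \<Longrightarrow> conn F y x"
proof -
  have "sym {(a, b). {a, b} \<in> F}"
    by (auto simp: sym_def insert_commute)
  then show "conn F x y \<Longrightarrow> conn F y x"
    unfolding conn_def by (auto dest: symD sym_rtrancl)
qed

lemma conn_step: "conn F x a \<Longrightarrow> {a, b} \<in> F \<Longrightarrow> conn F x b"
  unfolding conn_def by (rule rtrancl_into_rtrancl) auto

lemma conn_edge_iff: "{a, b} \<in> F \<Longrightarrow> conn F x a \<longleftrightarrow> conn F x b"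
  by (metis conn_step insert_commute)

lemma conn_spins_eq:
  assumes "conn F x y" "\<forall>f\<in>F. delta \<sigma> f"
  shows "\<sigma> x = \<sigma> y"
  using assms(1) unfolding conn_def
  by (induction rule: rtrancl_induct) (use assms(2) in \<open>auto simp: delta_def\<close>)

lemma graph_edgeE:
  assumes "graph V E" "e \<in> E"
  obtains u w where "u \<in> V" "w \<in> V" "u \<noteq> w" "e = {u, w}"
  using assms by (auto simp: graph_def)

lemma graph_edge_subset: "graph V E \<Longrightarrow> e \<in> E \<Longrightarrow> e \<subseteq> V"
  by (auto simp: graph_def)

lemma graph_finite_edges: "graph V E \<Longrightarrow> finite E"
  by (rule finite_subset[of E "Pow V"]) (auto simp: graph_def)

lemma conn_in_vertices:
  assumes "graph V E" "F \<subseteq> E" "conn F x y" "x \<in> V"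
  shows "y \<in> V"
  using assms(3) unfolding conn_def
proof (induction rule: rtrancl_induct)
  case (step a b)
  then have "{a, b} \<in> E"
    using assms(2) by auto
  then show ?case
    using graph_edge_subset[OF assms(1)] by auto
qed (use assms(4) in simp)

lemma delta_doubleton [simp]: "delta \<sigma> {u, w} \<longleftrightarrow> \<sigma> u = \<sigma> w"
  by (auto simp: delta_def)

lemma gamma_doubleton: "gamma \<eta> {u, w} \<longleftrightarrow> conn (\<eta> - {{u, w}}) u w"
  by (auto simp: gamma_def intro: conn_sym)

lemma flipE_inj: "flipE \<eta> e = flipE \<eta> e' \<Longrightarrow> e = e'"
  unfolding flipE_def by (auto split: if_splits)

lemma flipE_flipE [simp]: "flipE (flipE \<eta> e) e = \<eta>"
  unfolding flipE_def by auto

lemma mem_flipE [simp]: "e \<in> flipE \<eta> e \<longleftrightarrow> e \<notin> \<eta>"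
  unfolding flipE_def by auto

lemma gamma_flipE [simp]: "gamma (flipE \<eta> e) e = gamma \<eta> e"
  unfolding gamma_def flipE_def by (simp add: insert_Diff_if)

lemma flipcl_flipE [simp]: "flipcl (flipE \<eta> e) e = flipcl \<eta> e"
  unfolding flipcl_def flipE_def by (auto simp: insert_Diff_if)

lemma flipcl_flipcl [simp]: "flipcl \<eta> e x (flipcl \<eta> e x \<sigma>) = \<sigma>"
  unfolding flipcl_def by auto

lemma flipcl_eq_iff: "\<sigma>' = flipcl \<eta> e x \<sigma> \<longleftrightarrow> \<sigma> = flipcl \<eta> e x \<sigma>'"
  by auto

lemma spins_values: "\<sigma> \<in> spins V \<Longrightarrow> x \<in> V \<Longrightarrow> \<sigma> x = -1 \<or> \<sigma> x = 1"
  by (auto simp: spins_def)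

lemma finite_spins: "finite V \<Longrightarrow> finite (spins V)"
  unfolding spins_def by (rule finite_PiE) auto

lemma finite_CS: "graph V E \<Longrightarrow> finite (CS V E)"
  by (rule finite_subset[of _ "Pow E \<times> spins V"])
    (auto simp: CS_def graph_finite_edges finite_spins graph_def)

text \<open>As e is a bridge, x is the only endpoint of e in the cluster of x.\<close>
lemma delta_flipcl_bridge:
  assumes "\<sigma> \<in> spins V" "e = {u, w}" "u \<in> V" "w \<in> V" "\<not> gamma \<eta> e" "x \<in> e"
  shows "delta (flipcl \<eta> e x \<sigma>) e \<longleftrightarrow> \<not> delta \<sigma> e"
proof -
  have "\<not> conn (\<eta> - {e}) u w" "\<not> conn (\<eta> - {e}) w u"
    using assms(2,5) by (auto simp: gamma_doubleton dest: conn_sym)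
  then show ?thesis
    using assms spins_values[OF assms(1) assms(3)] spins_values[OF assms(1) assms(4)]
    by (auto simp: flipcl_def)
qed

lemma flipcl_spins:
  assumes "graph V E" "\<eta> \<subseteq> E" "\<sigma> \<in> spins V" "x \<in> V"
  shows "flipcl \<eta> e x \<sigma> \<in> spins V"
proof -
  have "\<not> conn (\<eta> - {e}) x y" if "y \<notin> V" for y
    using conn_in_vertices[OF assms(1) _ _ assms(4), of "\<eta> - {e}"] assms(2) that by blast
  then show ?thesis
    using assms(3) spins_values[OF assms(3)] by (auto simp: spins_def flipcl_def PiE_iff extensional_def)
qed

lemma CS_remove_flipcl:
  assumes "graph V E" "(\<eta>, \<sigma>) \<in> CS V E" "x \<in> V"
  shows "(\<eta> - {e}, flipcl \<eta> e x \<sigma>) \<in> CS V E"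
proof -
  have "delta (flipcl \<eta> e x \<sigma>) f" if f: "f \<in> \<eta> - {e}" for f
  proof -
    have "f \<in> E"
      using f assms(2) by (auto simp: CS_def)
    then obtain a b where "f = {a, b}"
      by (rule graph_edgeE[OF assms(1)])
    then show ?thesis
      using f assms(2) conn_edge_iff[of a b "\<eta> - {e}" x] by (auto simp: CS_def flipcl_def)
  qed
  then show ?thesis
    using assms flipcl_spins[OF assms(1)] by (auto simp: CS_def)
qed

lemma delta_if_gamma:
  assumes "gamma \<eta> e" "\<forall>f\<in>\<eta>. delta \<sigma> f"
  shows "delta \<sigma> e"
proof -
  have "\<sigma> x = \<sigma> y" if "x \<in> e" "y \<in> e" for x y
  proof -
    have "conn (\<eta> - {e}) x y"
      using assms(1) that by (simp add: gamma_def)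
    moreover have "\<forall>f\<in>\<eta> - {e}. delta \<sigma> f"
      using assms(2) by blast
    ultimately show ?thesis
      by (rule conn_spins_eq)
  qed
  then show ?thesis
    unfolding delta_def by blast
qed

lemma CS_flipE_iff:
  assumes "(\<eta>, \<sigma>) \<in> CS V E" "e \<in> E"
  shows "(flipE \<eta> e, \<sigma>) \<in> CS V E \<longleftrightarrow> e \<in> \<eta> \<or> delta \<sigma> e"
  using assms by (auto simp: CS_def flipE_def)

lemma CS_flipE_flipcl:
  assumes G: "graph V E" and s: "(\<eta>, \<sigma>) \<in> CS V E" and e: "e \<in> E"
    and bridge: "\<not> gamma \<eta> e" and x: "x \<in> e" and "e \<in> \<eta> \<longleftrightarrow> delta \<sigma> e"
  shows "(flipE \<eta> e, flipcl \<eta> e x \<sigma>) \<in> CS V E"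
proof -
  obtain u w where uw: "u \<in> V" "w \<in> V" "e = {u, w}"
    using G e by (rule graph_edgeE)
  have removed: "(\<eta> - {e}, flipcl \<eta> e x \<sigma>) \<in> CS V E"
    using CS_remove_flipcl[OF G s] x uw by auto
  show ?thesis
  proof (cases "e \<in> \<eta>")
    case False
    have "\<sigma> \<in> spins V"
      using s by (simp add: CS_def)
    then have "delta (flipcl \<eta> e x \<sigma>) e"
      using delta_flipcl_bridge[OF _ uw(3,1,2) bridge x] False assms(6) by blast
    then show ?thesis
      using removed False e by (auto simp: CS_def flipE_def)
  qed (use removed in \<open>simp add: flipE_def\<close>)
qed

section \<open>Rates of the joint dynamics\<close>

definition edge_rate :: "'v set \<Rightarrow> 'v set set \<Rightarrow> real \<Rightarrow>
    ('v set set \<times> ('v \<Rightarrow> int)) \<Rightarrow> ('v set set \<times> ('v \<Rightarrow> int)) \<Rightarrow> 'v set \<Rightarrow> real" where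
  "edge_rate V E p s s' e = (let \<eta> = fst s; \<sigma> = snd s; \<eta>' = fst s'; \<sigma>' = snd s' in
        (if \<sigma>' = \<sigma> \<and> \<eta>' = flipE \<eta> e \<and> gamma \<eta> e
         then frate p \<eta> e * of_bool (s \<in> CS V E) else 0)
      + (if \<sigma>' = \<sigma> \<and> \<eta>' = flipE \<eta> e \<and> \<not> gamma \<eta> e \<and> delta \<sigma> e
         then 1/2 * frate p \<eta> e * of_bool (s \<in> CS V E) else 0)
      + (\<Sum>x\<in>e. if x \<in> V \<and> \<eta>' = flipE \<eta> e \<and> \<not> gamma \<eta> e \<and> (e \<in> \<eta> \<longleftrightarrow> delta \<sigma> e)
                    \<and> \<sigma>' = flipcl \<eta> e x \<sigma>
                 then 1/4 * ((1 - p) * of_bool (e \<in> \<eta>) * of_bool (s \<in> CS V E)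
                             + p * of_bool (e \<notin> \<eta>) * of_bool (s' \<in> CS V E))
                 else 0))"

lemma crate_eq_sum_edge_rate: "crate V E p s s' = (\<Sum>e\<in>E. edge_rate V E p s s' e)"
  unfolding crate_def edge_rate_def Let_def by simp

lemma edge_rate_eq_0: "fst s' \<noteq> flipE (fst s) e \<Longrightarrow> edge_rate V E p s s' e = 0"
  unfolding edge_rate_def Let_def by simp

lemma crate_eq_0:
  assumes "\<forall>e\<in>E. \<eta>' \<noteq> flipE \<eta> e"
  shows "crate V E p (\<eta>, \<sigma>) (\<eta>', \<sigma>') = 0"
  using assms by (simp add: crate_eq_sum_edge_rate edge_rate_eq_0)

lemma crate_flipE:
  assumes "graph V E" "e \<in> E"
  shows "crate V E p (\<eta>, \<sigma>) (flipE \<eta> e, \<sigma>') = edge_rate V E p (\<eta>, \<sigma>) (flipE \<eta> e, \<sigma>') e"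
proof -
  have "(\<Sum>e'\<in>E - {e}. edge_rate V E p (\<eta>, \<sigma>) (flipE \<eta> e, \<sigma>') e') = 0"
    by (intro sum.neutral ballI edge_rate_eq_0) (auto dest: flipE_inj)
  then show ?thesis
    unfolding crate_eq_sum_edge_rate
    using sum.remove[OF graph_finite_edges[OF assms(1)] assms(2),
        of "edge_rate V E p (\<eta>, \<sigma>) (flipE \<eta> e, \<sigma>')"] by simp
qed

text \<open>The factor of the rate of flipping e between compatible configurations that depends on the
  spins; the other factor, frate p eta e, is common to the moves (a), (b) and (c).\<close>
definition edge_kernel :: "'v set set \<Rightarrow> 'v set \<Rightarrow> ('v \<Rightarrow> int) \<Rightarrow> ('v \<Rightarrow> int) \<Rightarrow> real" where
  "edge_kernel \<eta> e \<sigma> \<sigma>' =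
    (if gamma \<eta> e then of_bool (\<sigma>' = \<sigma>)
     else of_bool (\<sigma>' = \<sigma> \<and> delta \<sigma> e) / 2
       + of_bool (e \<in> \<eta> \<longleftrightarrow> delta \<sigma> e) * (\<Sum>x\<in>e. of_bool (\<sigma>' = flipcl \<eta> e x \<sigma>)) / 4)"

lemma edge_rate_CS:
  assumes "graph V E" "e \<in> E" "(\<eta>, \<sigma>) \<in> CS V E" "(flipE \<eta> e, \<sigma>') \<in> CS V E"
  shows "edge_rate V E p (\<eta>, \<sigma>) (flipE \<eta> e, \<sigma>') e = frate p \<eta> e * edge_kernel \<eta> e \<sigma> \<sigma>'"
proof -
  have "e \<subseteq> V"
    using assms(1,2) by (rule graph_edge_subset)
  then have sum_eq: "(\<Sum>x\<in>e. if x \<in> V \<and> A \<and> B \<and> C \<and> \<sigma>' = flipcl \<eta> e x \<sigma> then K else 0)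
      = of_bool (A \<and> B \<and> C) * K * (\<Sum>x\<in>e. of_bool (\<sigma>' = flipcl \<eta> e x \<sigma>))"
    for A B C and K :: real
    by (auto simp: sum_distrib_left intro!: sum.cong)
  show ?thesis
    unfolding edge_rate_def Let_def fst_conv snd_conv sum_eq
    using assms(3,4) by (simp add: edge_kernel_def frate_def algebra_simps)
qed

lemma crate_CS_flipE:
  assumes "graph V E" "e \<in> E" "(\<eta>, \<sigma>) \<in> CS V E" "(flipE \<eta> e, \<sigma>') \<in> CS V E"
  shows "crate V E p (\<eta>, \<sigma>) (flipE \<eta> e, \<sigma>') = frate p \<eta> e * edge_kernel \<eta> e \<sigma> \<sigma>'"
  using assms by (simp add: crate_flipE edge_rate_CS)

lemma edge_kernel_flipE:
  assumes G: "graph V E" and e: "e \<in> E" and spins: "\<sigma> \<in> spins V" "\<sigma>' \<in> spins V"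
  shows "edge_kernel (flipE \<eta> e) e \<sigma>' \<sigma> = edge_kernel \<eta> e \<sigma> \<sigma>'"
proof (cases "gamma \<eta> e")
  case bridge: False
  obtain u w where uw: "u \<in> V" "w \<in> V" "e = {u, w}"
    using G e by (rule graph_edgeE)
  have "of_bool (e \<in> flipE \<eta> e \<longleftrightarrow> delta \<sigma>' e) * of_bool (\<sigma> = flipcl \<eta> e x \<sigma>')
      = (of_bool (e \<in> \<eta> \<longleftrightarrow> delta \<sigma> e) * of_bool (\<sigma>' = flipcl \<eta> e x \<sigma>) :: real)"
    if "x \<in> e" for x
  proof (cases "\<sigma>' = flipcl \<eta> e x \<sigma>")
    case True
    then have "delta \<sigma>' e \<longleftrightarrow> \<not> delta \<sigma> e"
      using delta_flipcl_bridge[OF spins(1) uw(3,1,2) bridge that] by simp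
    then show ?thesis
      using True by auto
  qed (simp add: flipcl_eq_iff[of \<sigma>'])
  then have "of_bool (e \<in> flipE \<eta> e \<longleftrightarrow> delta \<sigma>' e) * (\<Sum>x\<in>e. of_bool (\<sigma> = flipcl \<eta> e x \<sigma>'))
      = (of_bool (e \<in> \<eta> \<longleftrightarrow> delta \<sigma> e) * (\<Sum>x\<in>e. of_bool (\<sigma>' = flipcl \<eta> e x \<sigma>)) :: real)"
    by (simp add: sum_distrib_left)
  then show ?thesis
    using bridge by (auto simp: edge_kernel_def)
qed (auto simp: edge_kernel_def)

lemma ipw_CS:
  "(\<eta>, \<sigma>) \<in> CS V E \<Longrightarrow> ipw E p (\<eta>, \<sigma>) = (\<Prod>f\<in>E. if f \<in> \<eta> then p else 1 - p)"
  unfolding ipw_def by (intro prod.cong) (auto simp: CS_def)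

text \<open>The IP-weight of the state of e times the rate of flipping e is p (1 - p) whether e is open
  or closed.\<close>
lemma ipw_mult_frate_flipE:
  assumes G: "graph V E" and e: "e \<in> E"
    and "(\<eta>, \<sigma>) \<in> CS V E" "(flipE \<eta> e, \<sigma>') \<in> CS V E"
  shows "ipw E p (\<eta>, \<sigma>) * frate p \<eta> e = ipw E p (flipE \<eta> e, \<sigma>') * frate p (flipE \<eta> e) e"
proof -
  let ?w = "\<lambda>\<eta> f. if f \<in> \<eta> then p else 1 - p"
  have split: "ipw E p (\<eta>', \<sigma>'') = ?w \<eta>' e * (\<Prod>f\<in>E - {e}. ?w \<eta>' f)"
    if "(\<eta>', \<sigma>'') \<in> CS V E" for \<eta>' \<sigma>''
    using that by (simp add: ipw_CS prod.remove[OF graph_finite_edges[OF G] e])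
  have "(\<Prod>f\<in>E - {e}. ?w (flipE \<eta> e) f) = (\<Prod>f\<in>E - {e}. ?w \<eta> f)"
    by (intro prod.cong) (auto simp: flipE_def)
  then show ?thesis
    using assms by (simp add: split frate_def)
qed

lemma ipw_crate_detailed_balance:
  assumes G: "graph V E" and s: "(\<eta>, \<sigma>) \<in> CS V E" and s': "(\<eta>', \<sigma>') \<in> CS V E"
  shows "ipw E p (\<eta>, \<sigma>) * crate V E p (\<eta>, \<sigma>) (\<eta>', \<sigma>')
       = ipw E p (\<eta>', \<sigma>') * crate V E p (\<eta>', \<sigma>') (\<eta>, \<sigma>)"
proof (cases "\<exists>e\<in>E. \<eta>' = flipE \<eta> e")
  case True
  then obtain e where e: "e \<in> E" and flip: "\<eta>' = flipE \<eta> e"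
    by blast
  have spins: "\<sigma> \<in> spins V" "\<sigma>' \<in> spins V"
    using s s' by (auto simp: CS_def)
  have reverse_rate:
    "crate V E p (flipE \<eta> e, \<sigma>') (\<eta>, \<sigma>) = frate p (flipE \<eta> e) e * edge_kernel \<eta> e \<sigma> \<sigma>'"
    using crate_CS_flipE[OF G e s'[unfolded flip], of \<sigma>] s edge_kernel_flipE[OF G e spins] by simp
  show ?thesis
    unfolding flip using ipw_mult_frate_flipE[OF G e s, of \<sigma>'] s'[unfolded flip]
    by (simp add: reverse_rate crate_CS_flipE[OF G e s] mult.assoc[symmetric])
next
  case False
  then have "\<forall>e\<in>E. \<eta> \<noteq> flipE \<eta>' e"
    by (metis flipE_flipE)
  with False show ?thesis
    by (simp add: crate_eq_0)
qed

lemma reversible_crate: "graph V E \<Longrightarrow> reversible (CS V E) (IP V E p) (crate V E p)"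
  unfolding reversible_def IP_def
  by (auto simp: ipw_crate_detailed_balance)

lemma sum_of_bool_snd_fiber:
  assumes "finite X"
  shows "(\<Sum>s\<in>{s\<in>X. fst s = a}. of_bool (snd s = b)) = (of_bool ((a, b) \<in> X) :: real)"
proof -
  have "(\<Sum>s\<in>{s\<in>X. fst s = a}. of_bool (snd s = b)) = (\<Sum>s\<in>{s\<in>X. fst s = a}. of_bool (s = (a, b)) :: real)"
    by (intro sum.cong) (auto simp: prod_eq_iff)
  then show ?thesis
    using assms by (simp add: of_bool_def sum.delta' cong: if_cong)
qed

lemma sum_edge_kernel_fiber:
  assumes G: "graph V E" and e: "e \<in> E" and s: "(\<eta>, \<sigma>) \<in> CS V E"
  shows "(\<Sum>s\<in>{s\<in>CS V E. fst s = flipE \<eta> e}. edge_kernel \<eta> e \<sigma> (snd s))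
       = (if e \<in> \<eta> \<or> gamma \<eta> e then 1 else 1/2)"
proof -
  let ?F = "{s\<in>CS V E. fst s = flipE \<eta> e}"
  have fiber: "(\<Sum>s\<in>?F. of_bool (snd s = \<tau>)) = (of_bool ((flipE \<eta> e, \<tau>) \<in> CS V E) :: real)" for \<tau>
    by (rule sum_of_bool_snd_fiber[OF finite_CS[OF G]])
  have compatible: "\<forall>f\<in>\<eta>. delta \<sigma> f"
    using s by (simp add: CS_def)
  show ?thesis
  proof (cases "gamma \<eta> e")
    case True
    then show ?thesis
      using fiber[of \<sigma>] CS_flipE_iff[OF s e] delta_if_gamma[OF True compatible]
      by (simp add: edge_kernel_def)
  next
    case bridge: False
    obtain u w where uw: "u \<noteq> w" "e = {u, w}"
      using G e by (rule graph_edgeE)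
    let ?C = "e \<in> \<eta> \<longleftrightarrow> delta \<sigma> e"
    have "(\<Sum>s\<in>?F. edge_kernel \<eta> e \<sigma> (snd s))
        = (\<Sum>s\<in>?F. of_bool (delta \<sigma> e) * of_bool (snd s = \<sigma>) / 2
            + of_bool ?C * (\<Sum>x\<in>e. of_bool (snd s = flipcl \<eta> e x \<sigma>)) / 4)"
      using bridge by (intro sum.cong) (auto simp: edge_kernel_def)
    also have "\<dots> = of_bool (delta \<sigma> e) * of_bool ((flipE \<eta> e, \<sigma>) \<in> CS V E) / 2
        + of_bool ?C * (\<Sum>x\<in>e. of_bool ((flipE \<eta> e, flipcl \<eta> e x \<sigma>) \<in> CS V E)) / 4"
      by (simp add: sum.distrib sum_divide_distrib[symmetric] sum_distrib_left[symmetric]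
          sum.swap[of _ e] fiber)
    also have "\<dots> = of_bool (delta \<sigma> e) / 2 + of_bool ?C * card e / 4"
      using CS_flipE_iff[OF s e] CS_flipE_flipcl[OF G s e bridge] by auto
    also have "\<dots> = (if e \<in> \<eta> then 1 else 1/2)"
      using uw compatible by auto
    finally show ?thesis
      using bridge by simp
  qed
qed

lemma fk_rate_flipE:
  assumes "graph V E" "e \<in> E"
  shows "fk_rate E p \<eta> (flipE \<eta> e) = (if e \<in> \<eta> then 1 - p else if gamma \<eta> e then p else p / 2)"
proof -
  have "(\<Sum>e'\<in>E - {e}. if flipE \<eta> e = flipE \<eta> e'
      then (if e' \<in> \<eta> then 1 - p else if gamma \<eta> e' then p else p / 2) else 0) = 0"
    by (intro sum.neutral) (auto dest: flipE_inj)
  then show ?thesis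
    unfolding fk_rate_def by (simp add: sum.remove[OF graph_finite_edges[OF assms(1)] assms(2)])
qed

lemma sum_crate_fiber:
  assumes G: "graph V E" and s: "(\<eta>, \<sigma>) \<in> CS V E"
  shows "(\<Sum>s'\<in>{s'\<in>CS V E. fst s' = \<eta>'}. crate V E p (\<eta>, \<sigma>) s') = fk_rate E p \<eta> \<eta>'"
proof (cases "\<exists>e\<in>E. \<eta>' = flipE \<eta> e")
  case True
  then obtain e where e: "e \<in> E" and flip: "\<eta>' = flipE \<eta> e"
    by blast
  have "(\<Sum>s'\<in>{s'\<in>CS V E. fst s' = \<eta>'}. crate V E p (\<eta>, \<sigma>) s')
      = (\<Sum>s'\<in>{s'\<in>CS V E. fst s' = \<eta>'}. frate p \<eta> e * edge_kernel \<eta> e \<sigma> (snd s'))"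
    using crate_CS_flipE[OF G e s] flip by (intro sum.cong) (auto simp: prod_eq_iff)
  also have "\<dots> = fk_rate E p \<eta> \<eta>'"
    by (simp add: flip sum_distrib_left[symmetric] sum_edge_kernel_fiber[OF G e s]
        fk_rate_flipE[OF G e] frate_def)
  finally show ?thesis .
next
  case False
  then show ?thesis
    by (auto simp: fk_rate_def crate_eq_0 intro!: sum.neutral)
qed

lemma edge_marginal_fk:
  assumes G: "graph V E"
  shows "marginal_mjp_with (CS V E) (gen (CS V E) (crate V E p)) fst (Pow E) (fk_rate E p)"
proof (rule marginal_mjp_with_if_lumpable)
  show "finite (CS V E)"
    using G by (rule finite_CS)
  show "finite (Pow E)" "fst ` CS V E \<subseteq> Pow E"
    using G by (auto simp: graph_finite_edges CS_def)
  fix s \<eta>' assume "s \<in> CS V E"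
  then show "(\<Sum>s'\<in>{s'\<in>CS V E. fst s' = \<eta>'}. crate V E p s s') = fk_rate E p (fst s) \<eta>'"
    using sum_crate_fiber[OF G, of "fst s" "snd s"] by simp
qed

lemma crate_nonneg: "0 \<le> p \<Longrightarrow> p \<le> 1 \<Longrightarrow> 0 \<le> crate V E p s s'"
  by (auto simp: crate_def Let_def frate_def intro!: sum_nonneg add_nonneg_nonneg)

text \<open>Moves of type (c) from a closed edge need disagreeing endpoints; (a) and (b) keep the
  spins.\<close>
lemma crate_closed_monochromatic:
  assumes "\<forall>e\<in>E. delta \<sigma> e" "snd s \<noteq> \<sigma>"
  shows "crate V E p ({}, \<sigma>) s = 0"
  using assms by (simp add: crate_def)

lemma crate_close_bridge_pos:
  assumes G: "graph V E" and s: "(\<eta>, \<sigma>) \<in> CS V E" and e: "e \<in> \<eta>"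
    and bridge: "\<not> gamma \<eta> e" and x: "x \<in> e" and "p < 1"
  shows "0 < crate V E p (\<eta>, \<sigma>) (\<eta> - {e}, flipcl \<eta> e x \<sigma>)"
proof -
  have eE: "e \<in> E" and "delta \<sigma> e"
    using s e by (auto simp: CS_def)
  have flip: "flipE \<eta> e = \<eta> - {e}"
    using e by (simp add: flipE_def)
  have "finite e"
    using G eE by (auto elim: graph_edgeE)
  then have "1 \<le> (\<Sum>x'\<in>e. of_bool (flipcl \<eta> e x \<sigma> = flipcl \<eta> e x' \<sigma>) :: real)"
    using member_le_sum[OF x, of "\<lambda>x'. of_bool (flipcl \<eta> e x \<sigma> = flipcl \<eta> e x' \<sigma>) :: real"] by simp
  then have "0 < edge_kernel \<eta> e \<sigma> (flipcl \<eta> e x \<sigma>)"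
    using bridge e \<open>delta \<sigma> e\<close> by (simp add: edge_kernel_def add_nonneg_pos)
  moreover have "(\<eta> - {e}, flipcl \<eta> e x \<sigma>) \<in> CS V E"
    using CS_flipE_flipcl[OF G s eE bridge x] e \<open>delta \<sigma> e\<close> flip by simp
  ultimately show ?thesis
    using crate_CS_flipE[OF G eE s] e \<open>p < 1\<close> by (simp add: flip frate_def)
qed

lemma spin_marginal_not_mjp:
  assumes G: "graph V E" and "E \<noteq> {}" and p: "0 < p" "p < 1"
  shows "\<not> marginal_is_mjp (CS V E) (gen (CS V E) (crate V E p)) snd (spins V)"
proof
  assume "marginal_is_mjp (CS V E) (gen (CS V E) (crate V E p)) snd (spins V)"
  then obtain r where mjp: "marginal_mjp_with (CS V E) (gen (CS V E) (crate V E p)) snd (spins V) r"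
    unfolding marginal_is_mjp_def by blast
  obtain e where e: "e \<in> E"
    using \<open>E \<noteq> {}\<close> by blast
  obtain u w where uw: "u \<in> V" "u \<noteq> w" "e = {u, w}"
    using G e by (rule graph_edgeE)
  define \<sigma> :: "'a \<Rightarrow> int" where "\<sigma> = restrict (\<lambda>_. 1) V"
  define y where "y = flipcl {e} e u \<sigma>"
  let ?F = "{s\<in>CS V E. snd s = y}"
  have \<sigma>: "\<sigma> \<in> spins V" "\<forall>f\<in>E. delta \<sigma> f"
    using graph_edge_subset[OF G] by (auto simp: \<sigma>_def spins_def delta_def subset_iff)
  then have closed: "({}, \<sigma>) \<in> CS V E" and single: "({e}, \<sigma>) \<in> CS V E"
    using e by (auto simp: CS_def)
  have "y \<noteq> \<sigma>"
    using uw(1) by (auto simp: y_def flipcl_def \<sigma>_def dest: fun_cong[of _ _ u])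
  have bridge: "\<not> gamma {e} e"
    using uw by (simp add: gamma_doubleton conn_def)
  have gen_eq: "(\<Sum>s\<in>?F. gen (CS V E) (crate V E p) (\<eta>, \<sigma>) s) = (\<Sum>s\<in>?F. crate V E p (\<eta>, \<sigma>) s)"
    for \<eta>
    using \<open>y \<noteq> \<sigma>\<close> by (intro sum.cong) (auto simp: gen_def)
  have "(\<Sum>s\<in>?F. crate V E p ({}, \<sigma>) s) = 0"
    using crate_closed_monochromatic[OF \<sigma>(2)] \<open>y \<noteq> \<sigma>\<close> by (intro sum.neutral) auto
  moreover have "(\<Sum>s\<in>?F. gen (CS V E) (crate V E p) ({}, \<sigma>) s)
      = (\<Sum>s\<in>?F. gen (CS V E) (crate V E p) ({e}, \<sigma>) s)"
    using marginal_mjp_with_fiber_rates_eq[OF finite_CS[OF G] mjp closed single]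
      flipcl_spins[OF G _ \<sigma>(1) uw(1), of "{e}" e] e by (simp add: y_def)
  ultimately have "(\<Sum>s\<in>?F. crate V E p ({e}, \<sigma>) s) = 0"
    by (simp add: gen_eq)
  moreover have "0 < crate V E p ({e}, \<sigma>) ({}, y)"
    using crate_close_bridge_pos[OF G single _ bridge _ p(2), of u] uw by (simp add: y_def)
  moreover have "({}, y) \<in> ?F"
    using CS_remove_flipcl[OF G single uw(1), of e] by (simp add: y_def)
  moreover have "crate V E p ({e}, \<sigma>) ({}, y) \<le> (\<Sum>s\<in>?F. crate V E p ({e}, \<sigma>) s)"
    using calculation(3) finite_CS[OF G] p by (intro member_le_sum crate_nonneg) auto
  ultimately show False
    by linarith
qed

theorem theorem5:
  fixes V :: "'v set" and E :: "'v set set" and p :: real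
  assumes "graph V E" and "E \<noteq> {}" and "0 < p" and "p < 1"
  shows "reversible (CS V E) (IP V E p) (crate V E p)
       \<and> marginal_mjp_with (CS V E) (gen (CS V E) (crate V E p)) fst (Pow E) (fk_rate E p)
       \<and> \<not> marginal_is_mjp (CS V E) (gen (CS V E) (crate V E p)) snd (spins V)"
  using reversible_crate[OF assms(1)] edge_marginal_fk[OF assms(1)] spin_marginal_not_mjp[OF assms]
  by blast

end
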